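(* Let $D$ be an integral domain, $W$ a multiplicative submonoid of $D$, and $0\neq x\in D$. Set $\mathfrak p(W):=\bigcap_{f\in W\setminus\{0\}}\mathfrak p_f\subseteq R(D)$. Then (1) $\mathfrak p(W)$ is a prime ideal of $R(D)$, and (2) $\frac1x\notin\mathfrak p(W)$ if and only if $x\in G(W)$.
   Context: For an integral domain $D$ with fraction field $F$, the reciprocal complement $R(D)$ is the subring of $F$ generated by all $1/d$, $d\in D\setminus\{0\}$. For nonzero $f\in D$, $\mathfrak p_f$ denotes the unique prime ideal of $R(D)$ maximal with respect to not containing $1/f$. A factroid of $D$ is an additive subgroup $H$ of $D$ such that whenever $f,g\in D\setminus\{0\}$ with $fg\in H$, then $f,g\in H$. For $S\subseteq D$, $[S]_D$ is the smallest factroid of $D$ containing $S$. A factroid $H$ is regular if $\{y\in D\mid gy\in[gH]_D\}=H$ for every nonzero $g\in D$. For $S\subseteq D$, $G(S)$ is the intersection of all regular factroids of $D$ containing $S$; equivalently $G(S)=\bigcup_{d\in D\setminus\{0\}}\{y\in D\mid dy\in[dS]_D\}$. *)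

theory Defs
  imports "HOL-Computational_Algebra.Fraction_Field"
begin

text \<open>The integral domain D is the type 'a :: idom; its fraction field is 'a fract.
  The element 1/d of the fraction field is Fract 1 d.\<close>

definition is_subring_fract :: "'a::idom fract set \<Rightarrow> bool" where
  "is_subring_fract S \<longleftrightarrow> 0 \<in> S \<and> 1 \<in> S \<and>
     (\<forall>a\<in>S. \<forall>b\<in>S. a + b \<in> S \<and> a - b \<in> S \<and> a * b \<in> S)"

definition recip_compl :: "'a::idom fract set" where
  "recip_compl = \<Inter>{S. is_subring_fract S \<and> (\<forall>d::'a. d \<noteq> 0 \<longrightarrow> Fract 1 d \<in> S)}"

definition prime_ideal_of :: "'a::idom fract set \<Rightarrow> 'a fract set \<Rightarrow> bool" where
  "prime_ideal_of R P \<longleftrightarrow> P \<subseteq> R \<and> 0 \<in> P \<and>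
     (\<forall>a\<in>P. \<forall>b\<in>P. a + b \<in> P \<and> a - b \<in> P) \<and>
     (\<forall>r\<in>R. \<forall>a\<in>P. r * a \<in> P) \<and> 1 \<notin> P \<and>
     (\<forall>a\<in>R. \<forall>b\<in>R. a * b \<in> P \<longrightarrow> a \<in> P \<or> b \<in> P)"

definition p_of :: "'a::idom \<Rightarrow> 'a fract set" where
  "p_of f = (THE P. prime_ideal_of recip_compl P \<and> Fract 1 f \<notin> P \<and>
      (\<forall>Q. prime_ideal_of recip_compl Q \<and> Fract 1 f \<notin> Q \<and> P \<subseteq> Q \<longrightarrow> Q = P))"

definition p_W :: "'a::idom set \<Rightarrow> 'a fract set" where
  "p_W W = (\<Inter>f\<in>W - {0}. p_of f)"

definition factroid :: "'a::idom set \<Rightarrow> bool" where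
  "factroid H \<longleftrightarrow> 0 \<in> H \<and> (\<forall>a\<in>H. \<forall>b\<in>H. a + b \<in> H \<and> a - b \<in> H) \<and>
     (\<forall>f g. f \<noteq> 0 \<and> g \<noteq> 0 \<and> f * g \<in> H \<longrightarrow> f \<in> H \<and> g \<in> H)"

definition factroid_hull :: "'a::idom set \<Rightarrow> 'a set" where
  "factroid_hull S = \<Inter>{H. factroid H \<and> S \<subseteq> H}"

definition regular_factroid :: "'a::idom set \<Rightarrow> bool" where
  "regular_factroid H \<longleftrightarrow> factroid H \<and>
     (\<forall>g. g \<noteq> 0 \<longrightarrow> {y. g * y \<in> factroid_hull ((\<lambda>h. g * h) ` H)} = H)"

definition G_of :: "'a::idom set \<Rightarrow> 'a set" where
  "G_of S = \<Inter>{H. regular_factroid H \<and> S \<subseteq> H}"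

end

theory Submission
  imports Defs
begin

text \<open>
  For a subring E of a field, the reciprocal complement R(E) is local: if N is a maximal ideal
  and 1/e \<notin> N for some e \<in> E, then e \<in> R(E), because modulo N every element of R(E) is a
  quotient of elements of E whose reciprocals avoid N. Hence every nonunit of R(E) lies in the
  Jacobson radical.

  Apply this to the localisation D_f = D[1/f]. Its reciprocal complement consists of the r f^k
  with r \<in> R(D), so the contraction of its maximal ideal to R(D) is a prime containing every
  prime that avoids 1/f, i.e. it is p_f, and 1/x \<notin> p_f exactly when x = r f^k. Since
  p_fg \<subseteq> p_f \<inter> p_g, the p_f for f \<in> W form a downward directed family of primes, so p(W)
  is prime, and 1/x \<notin> p(W) iff x \<in> R(D) W. Finally D \<inter> R(D) W is G(W): it is a regular
  factroid, and for r \<in> R(D) and f \<noteq> 0 some nonzero d puts d r f into the factroid generated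
  by d f, which forces every regular factroid containing W to contain D \<inter> R(D) W.
\<close>

section \<open>Reciprocal complements of subrings of a field\<close>

definition is_subring :: "'k::field set \<Rightarrow> bool" where
  "is_subring S \<longleftrightarrow> 0 \<in> S \<and> 1 \<in> S \<and>
     (\<forall>a\<in>S. \<forall>b\<in>S. a + b \<in> S \<and> - a \<in> S \<and> a * b \<in> S)"

lemma
  assumes "is_subring S"
  shows subring_zero: "0 \<in> S" and subring_one: "1 \<in> S"
    and subring_add: "a \<in> S \<Longrightarrow> b \<in> S \<Longrightarrow> a + b \<in> S"
    and subring_uminus: "a \<in> S \<Longrightarrow> - a \<in> S"
    and subring_mult: "a \<in> S \<Longrightarrow> b \<in> S \<Longrightarrow> a * b \<in> S"
  using assms unfolding is_subring_def by auto

lemma subring_diff: "is_subring S \<Longrightarrow> a \<in> S \<Longrightarrow> b \<in> S \<Longrightarrow> a - b \<in> S"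
  by (metis diff_conv_add_uminus subring_add subring_uminus)

lemma subring_power: "is_subring S \<Longrightarrow> a \<in> S \<Longrightarrow> a ^ n \<in> S"
  by (induction n) (auto intro: subring_one subring_mult)

text \<open>For a subring E this is R(E): the sums of reciprocals are already closed under products.\<close>
inductive_set recip_sums :: "'k::field set \<Rightarrow> 'k set" for E where
  zero: "0 \<in> recip_sums E"
| add_inverse: "x \<in> recip_sums E \<Longrightarrow> e \<in> E \<Longrightarrow> e \<noteq> 0 \<Longrightarrow> x + inverse e \<in> recip_sums E"

lemma recip_sums_inverse: "e \<in> E \<Longrightarrow> e \<noteq> 0 \<Longrightarrow> inverse e \<in> recip_sums E"
  using recip_sums.add_inverse[OF recip_sums.zero] by fastforce

lemma recip_sums_add:
  assumes "x \<in> recip_sums E"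
  shows "y \<in> recip_sums E \<Longrightarrow> x + y \<in> recip_sums E"
proof (induction y rule: recip_sums.induct)
  case (add_inverse y e)
  then show ?case using recip_sums.add_inverse[of "x + y" E e] by (simp add: add.assoc)
qed (simp add: assms)

lemma recip_sums_uminus:
  assumes "is_subring E"
  shows "x \<in> recip_sums E \<Longrightarrow> - x \<in> recip_sums E"
proof (induction x rule: recip_sums.induct)
  case (add_inverse x e)
  then show ?case
    using recip_sums.add_inverse[of "- x" E "- e"] subring_uminus[OF assms] by fastforce
qed (simp add: recip_sums.zero)

lemma recip_sums_mult_inverse:
  assumes "is_subring E" "e \<in> E" "e \<noteq> 0"
  shows "y \<in> recip_sums E \<Longrightarrow> y * inverse e \<in> recip_sums E"
proof (induction y rule: recip_sums.induct)
  case (add_inverse y e')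
  then have "y * inverse e + inverse (e' * e) \<in> recip_sums E"
    using add_inverse subring_mult[OF assms(1)] assms by (intro recip_sums.add_inverse) auto
  then show ?case by (simp add: algebra_simps)
qed (simp add: recip_sums.zero)

lemma recip_sums_mult:
  assumes "is_subring E"
  shows "x \<in> recip_sums E \<Longrightarrow> y \<in> recip_sums E \<Longrightarrow> x * y \<in> recip_sums E"
proof (induction x rule: recip_sums.induct)
  case (add_inverse x e)
  then have "x * y + y * inverse e \<in> recip_sums E"
    using recip_sums_add recip_sums_mult_inverse[OF assms] by blast
  then show ?case by (simp add: algebra_simps)
qed (simp add: recip_sums.zero)

lemma is_subring_recip_sums:
  assumes "is_subring E"
  shows "is_subring (recip_sums E)"
  unfolding is_subring_def
  using recip_sums.zero recip_sums_inverse[OF subring_one[OF assms]] recip_sums_add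
    recip_sums_uminus[OF assms] recip_sums_mult[OF assms]
  by simp blast

lemma recip_sums_mono: "E \<subseteq> E' \<Longrightarrow> recip_sums E \<subseteq> recip_sums E'"
proof
  fix x assume "x \<in> recip_sums E" "E \<subseteq> E'"
  then show "x \<in> recip_sums E'"
    by (induction x rule: recip_sums.induct) (auto intro: recip_sums.intros)
qed

definition is_ideal :: "'k::field set \<Rightarrow> 'k set \<Rightarrow> bool" where
  "is_ideal A N \<longleftrightarrow> N \<subseteq> A \<and> 0 \<in> N \<and> (\<forall>a\<in>N. \<forall>b\<in>N. a + b \<in> N) \<and>
     (\<forall>r\<in>A. \<forall>a\<in>N. r * a \<in> N)"

definition maximal_ideal :: "'k::field set \<Rightarrow> 'k set \<Rightarrow> bool" where
  "maximal_ideal A N \<longleftrightarrow> is_ideal A N \<and> 1 \<notin> N \<and>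
     (\<forall>J. is_ideal A J \<and> 1 \<notin> J \<and> N \<subseteq> J \<longrightarrow> J = N)"

definition nonunits :: "'k::field set \<Rightarrow> 'k set" where
  "nonunits A = {x \<in> A. x = 0 \<or> inverse x \<notin> A}"

definition jacobson :: "'k::field set \<Rightarrow> 'k set" where
  "jacobson A = {z \<in> A. \<forall>N. maximal_ideal A N \<longrightarrow> z \<in> N}"

lemma
  assumes "is_ideal A N"
  shows ideal_subset: "N \<subseteq> A" and ideal_zero: "0 \<in> N"
    and ideal_add: "a \<in> N \<Longrightarrow> b \<in> N \<Longrightarrow> a + b \<in> N"
    and ideal_mult_left: "r \<in> A \<Longrightarrow> a \<in> N \<Longrightarrow> r * a \<in> N"
  using assms unfolding is_ideal_def by blast+

lemma ideal_mult_right: "is_ideal A N \<Longrightarrow> r \<in> A \<Longrightarrow> a \<in> N \<Longrightarrow> a * r \<in> N"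
  by (metis ideal_mult_left mult.commute)

lemma ideal_uminus: "is_subring A \<Longrightarrow> is_ideal A N \<Longrightarrow> a \<in> N \<Longrightarrow> - a \<in> N"
  using ideal_mult_left[of A N "- 1" a] subring_uminus[of A 1] subring_one[of A] by simp

lemma ideal_diff: "is_subring A \<Longrightarrow> is_ideal A N \<Longrightarrow> a \<in> N \<Longrightarrow> b \<in> N \<Longrightarrow> a - b \<in> N"
  by (metis diff_conv_add_uminus ideal_add ideal_uminus)

lemma maximal_ideal_is_ideal: "maximal_ideal A N \<Longrightarrow> is_ideal A N"
  and maximal_ideal_one: "maximal_ideal A N \<Longrightarrow> 1 \<notin> N"
  unfolding maximal_ideal_def by auto

lemma ideal_subset_nonunits:
  assumes "is_ideal A N" "1 \<notin> N"
  shows "N \<subseteq> nonunits A"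
proof
  fix x assume "x \<in> N"
  have "inverse x \<notin> A" if "x \<noteq> 0"
    using ideal_mult_left[OF assms(1) _ \<open>x \<in> N\<close>, of "inverse x"] assms(2) that by auto
  then show "x \<in> nonunits A" using ideal_subset[OF assms(1)] \<open>x \<in> N\<close> unfolding nonunits_def by blast
qed

lemma is_ideal_principal:
  assumes A: "is_subring A" and y: "y \<in> A"
  shows "is_ideal A ((\<lambda>r. r * y) ` A)"
  unfolding is_ideal_def
proof (intro conjI ballI)
  fix a b assume "a \<in> (\<lambda>r. r * y) ` A" "b \<in> (\<lambda>r. r * y) ` A"
  then obtain r s where "a = r * y" "b = s * y" "r \<in> A" "s \<in> A" by blast
  then have "a + b = (r + s) * y" "r + s \<in> A" by (simp_all add: distrib_right subring_add[OF A])
  then show "a + b \<in> (\<lambda>r. r * y) ` A" by blast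
next
  fix t a assume "t \<in> A" "a \<in> (\<lambda>r. r * y) ` A"
  then obtain r where "a = r * y" "r \<in> A" by blast
  then have "t * a = (t * r) * y" "t * r \<in> A"
    by (simp_all add: mult.assoc subring_mult[OF A \<open>t \<in> A\<close>])
  then show "t * a \<in> (\<lambda>r. r * y) ` A" by blast
next
  show "(\<lambda>r. r * y) ` A \<subseteq> A" using subring_mult[OF A _ y] by blast
  have "0 = 0 * y" by simp
  then show "0 \<in> (\<lambda>r. r * y) ` A" using subring_zero[OF A] by blast
qed

lemma is_ideal_Union_chain:
  assumes "C \<noteq> {}" "\<forall>J\<in>C. is_ideal A J" "\<forall>I\<in>C. \<forall>J\<in>C. I \<subseteq> J \<or> J \<subseteq> I"
  shows "is_ideal A (\<Union>C)"
  unfolding is_ideal_def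
proof (intro conjI ballI)
  fix a b assume "a \<in> \<Union>C" "b \<in> \<Union>C"
  then obtain I J where "a \<in> I" "b \<in> J" "I \<in> C" "J \<in> C" by blast
  with assms(3) have "a \<in> I \<union> J" "b \<in> I \<union> J" "I \<union> J \<in> C"
    by (metis sup.absorb1 sup.absorb2 UnI1 UnI2)+
  then show "a + b \<in> \<Union>C" using assms(2) ideal_add by blast
next
  fix r a assume "r \<in> A" "a \<in> \<Union>C"
  with assms(2) show "r * a \<in> \<Union>C" by (meson UnionE UnionI ideal_mult_left)
next
  show "\<Union>C \<subseteq> A" using assms(2) ideal_subset by blast
  show "0 \<in> \<Union>C" using assms(1,2) ideal_zero by blast
qed

lemma ex_maximal_ideal:
  assumes A: "is_subring A" and y: "y \<in> nonunits A"
  shows "\<exists>N. maximal_ideal A N \<and> y \<in> N"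
proof -
  define \<I> where "\<I> = {J. is_ideal A J \<and> 1 \<notin> J \<and> y \<in> J}"
  have yA: "y \<in> A" using y unfolding nonunits_def by blast
  have "1 \<notin> (\<lambda>r. r * y) ` A"
  proof
    assume "1 \<in> (\<lambda>r. r * y) ` A"
    then obtain r where "1 = r * y" "r \<in> A" by blast
    then have "y \<noteq> 0" "inverse y = r" using inverse_unique[of y r] by (auto simp: mult.commute)
    then show False using y \<open>r \<in> A\<close> unfolding nonunits_def by blast
  qed
  moreover have "y \<in> (\<lambda>r. r * y) ` A" using subring_one[OF A] by force
  ultimately have "(\<lambda>r. r * y) ` A \<in> \<I>"
    unfolding \<I>_def using is_ideal_principal[OF A yA] by blast
  then have "\<exists>M\<in>\<I>. \<forall>J\<in>\<I>. M \<subseteq> J \<longrightarrow> J = M"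
  proof (intro subset_Zorn_nonempty)
    fix C assume "C \<noteq> {}" "subset.chain \<I> C"
    then show "\<Union>C \<in> \<I>"
      using is_ideal_Union_chain[of C A] unfolding \<I>_def subset_chain_def by blast
  qed blast
  then show ?thesis unfolding \<I>_def maximal_ideal_def by blast
qed

lemma maximal_ideal_inverse_mod:
  assumes A: "is_subring A" and N: "maximal_ideal A N" and a: "a \<in> A" "a \<notin> N"
  shows "\<exists>r\<in>A. r * a - 1 \<in> N"
proof -
  have iN: "is_ideal A N" using maximal_ideal_is_ideal[OF N] .
  define J where "J = {n + r * a | n r. n \<in> N \<and> r \<in> A}"
  have "is_ideal A J" unfolding is_ideal_def
  proof (intro conjI ballI)
    show "J \<subseteq> A" unfolding J_def
      using subring_add[OF A] subring_mult[OF A _ a(1)] ideal_subset[OF iN] by blast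
    show "0 \<in> J" unfolding J_def using subring_zero[OF A] ideal_zero[OF iN] by force
  next
    fix x y assume "x \<in> J" "y \<in> J"
    then obtain n r m s where "x = n + r * a" "y = m + s * a" "n \<in> N" "m \<in> N" "r \<in> A" "s \<in> A"
      unfolding J_def by blast
    moreover have "(n + r * a) + (m + s * a) = (n + m) + (r + s) * a" by (simp add: algebra_simps)
    moreover have "n + m \<in> N" "r + s \<in> A"
      using calculation subring_add[OF A] ideal_add[OF iN] by blast+
    ultimately show "x + y \<in> J" unfolding J_def by blast
  next
    fix t x assume "t \<in> A" "x \<in> J"
    then obtain n r where "x = n + r * a" "n \<in> N" "r \<in> A" unfolding J_def by blast
    moreover have "t * (n + r * a) = t * n + (t * r) * a" by (simp add: algebra_simps)
    moreover have "t * n \<in> N" "t * r \<in> A"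
      using calculation subring_mult[OF A] ideal_mult_left[OF iN] \<open>t \<in> A\<close> by blast+
    ultimately show "t * x \<in> J" unfolding J_def by blast
  qed
  moreover have "N \<subseteq> J" unfolding J_def using subring_zero[OF A] by force
  moreover have "a \<in> J" unfolding J_def using ideal_zero[OF iN] subring_one[OF A] by force
  ultimately have "1 \<in> J" using N a(2) unfolding maximal_ideal_def by blast
  then obtain n r where "1 = n + r * a" "n \<in> N" "r \<in> A" unfolding J_def by blast
  then have "r * a - 1 = - n" by (simp add: algebra_simps)
  then show ?thesis using ideal_uminus[OF A iN \<open>n \<in> N\<close>] \<open>r \<in> A\<close> by metis
qed

lemma maximal_ideal_prime:
  assumes A: "is_subring A" and N: "maximal_ideal A N"
    and "a \<in> A" "b \<in> A" "a * b \<in> N"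
  shows "a \<in> N \<or> b \<in> N"
proof (rule ccontr)
  assume "\<not> (a \<in> N \<or> b \<in> N)"
  moreover obtain r where r: "r \<in> A" "r * a - 1 \<in> N"
    using maximal_ideal_inverse_mod assms calculation by blast
  moreover have "b = r * (a * b) - b * (r * a - 1)" by (simp add: algebra_simps)
  ultimately show False
    using ideal_diff[OF A] ideal_mult_left ideal_mult_right maximal_ideal_is_ideal[OF N] assms
    by metis
qed

lemma is_ideal_jacobson: "is_subring A \<Longrightarrow> is_ideal A (jacobson A)"
  unfolding is_ideal_def jacobson_def maximal_ideal_def
  by (auto intro: subring_zero subring_add subring_mult)

lemma jacobson_add_unit:
  assumes A: "is_subring A" and u: "u \<in> A" "u \<noteq> 0" "inverse u \<in> A" and j: "j \<in> jacobson A"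
  shows "u + j \<notin> nonunits A"
proof
  assume "u + j \<in> nonunits A"
  then obtain N where N: "maximal_ideal A N" "u + j \<in> N" using ex_maximal_ideal[OF A] by blast
  have "j \<in> N" using j N(1) unfolding jacobson_def by blast
  then have "(u + j) - j \<in> N" using ideal_diff[OF A maximal_ideal_is_ideal[OF N(1)] N(2)] by blast
  then have "inverse u * u \<in> N"
    using ideal_mult_left[OF maximal_ideal_is_ideal[OF N(1)] u(3)] by simp
  then show False using u(2) maximal_ideal_one[OF N(1)] by simp
qed

section \<open>Reciprocal complements are local\<close>

lemma recip_sums_decompose:
  assumes T: "is_subring T" and N: "is_ideal (recip_sums E) N"
    and outside: "\<And>e. e \<in> E \<Longrightarrow> e \<noteq> 0 \<Longrightarrow> e \<notin> T \<Longrightarrow> inverse e \<in> N"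
    and r: "r \<in> recip_sums E"
  shows "\<exists>s c n. s \<in> T \<and> c \<in> T \<and> c \<noteq> 0 \<and> n \<in> N \<and> r = s / c + n"
  using r
proof (induction r rule: recip_sums.induct)
  case zero
  show ?case using subring_zero[OF T] subring_one[OF T] ideal_zero[OF N]
    by (intro exI[of _ 0] exI[of _ 1] exI[of _ 0]) simp
next
  case (add_inverse x e)
  then obtain s c n where h: "s \<in> T" "c \<in> T" "c \<noteq> 0" "n \<in> N" "x = s / c + n" by blast
  show ?case
  proof (cases "e \<in> T")
    case True
    have "x + inverse e = (s * e + c) / (c * e) + n"
      unfolding h(5) using h(3) add_inverse.hyps(3) by (simp add: field_simps)
    moreover have "s * e + c \<in> T" "c * e \<in> T" "c * e \<noteq> 0"
      using h True add_inverse.hyps subring_add[OF T] subring_mult[OF T] by auto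
    ultimately show ?thesis using h(4) by blast
  next
    case False
    then have "n + inverse e \<in> N" using ideal_add[OF N h(4)] outside add_inverse.hyps by blast
    moreover have "x + inverse e = s / c + (n + inverse e)" using h by simp
    ultimately show ?thesis using h(1-3) by blast
  qed
qed

lemma is_subring_inverse_avoiding:
  assumes E: "is_subring E" and N: "maximal_ideal (recip_sums E) N"
  shows "is_subring {t \<in> E. t = 0 \<or> inverse t \<notin> N}" (is "is_subring ?T")
proof -
  let ?A = "recip_sums E"
  have A: "is_subring ?A" and iN: "is_ideal ?A N"
    using is_subring_recip_sums[OF E] maximal_ideal_is_ideal[OF N] .
  have mult: "a * b \<in> ?T" if "a \<in> ?T" "b \<in> ?T" for a b
  proof -
    have "inverse (a * b) \<notin> N" if "a \<noteq> 0" "b \<noteq> 0"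
    proof
      assume "inverse (a * b) \<in> N"
      then have "inverse a * inverse b \<in> N" by (simp add: inverse_mult_distrib)
      moreover have "inverse a \<in> ?A" "inverse b \<in> ?A"
        using \<open>a \<in> ?T\<close> \<open>b \<in> ?T\<close> that recip_sums_inverse by auto
      ultimately show False
        using maximal_ideal_prime[OF A N] \<open>a \<in> ?T\<close> \<open>b \<in> ?T\<close> that by blast
    qed
    then show ?thesis using that subring_mult[OF E] by auto
  qed
  have uminus: "- a \<in> ?T" if "a \<in> ?T" for a
    using that subring_uminus[OF E] ideal_uminus[OF A iN, of "inverse (- a)"] by auto
  have add: "a + b \<in> ?T" if "a \<in> ?T" "b \<in> ?T" for a b
  proof (cases "a = 0 \<or> b = 0 \<or> a + b = 0")
    case True
    then show ?thesis using that subring_add[OF E] by auto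
  next
    case False
    have "inverse (a + b) \<notin> N"
    proof
      assume "inverse (a + b) \<in> N"
      moreover have "inverse a + inverse b \<in> ?A"
        using that False by (auto intro: recip_sums_add recip_sums_inverse)
      ultimately have "inverse (a + b) * (inverse a + inverse b) \<in> N"
        using ideal_mult_right[OF iN] by blast
      moreover have "inverse (a + b) * (inverse a + inverse b) = inverse (a * b)"
        using False by (simp add: field_simps)
      ultimately show False using mult[OF that] False by auto
    qed
    then show ?thesis using that subring_add[OF E] by auto
  qed
  show ?thesis unfolding is_subring_def
    using subring_zero[OF E] subring_one[OF E] maximal_ideal_one[OF N] mult uminus add by auto
qed

lemma recip_sums_maximal_ideal_inverse:
  assumes E: "is_subring E" and N: "maximal_ideal (recip_sums E) N"
    and e: "e \<in> E" "e \<noteq> 0" "inverse e \<notin> N"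
  shows "e \<in> recip_sums E"
proof -
  let ?A = "recip_sums E" and ?T = "{t \<in> E. t = 0 \<or> inverse t \<notin> N}"
  have A: "is_subring ?A" and iN: "is_ideal ?A N"
    using is_subring_recip_sums[OF E] maximal_ideal_is_ideal[OF N] .
  have T: "is_subring ?T" using is_subring_inverse_avoiding[OF E N] .
  have ie: "inverse e \<in> ?A" using recip_sums_inverse[OF e(1,2)] .
  obtain r where r: "r \<in> ?A" "r * inverse e - 1 \<in> N"
    using maximal_ideal_inverse_mod[OF A N ie e(3)] by blast
  obtain s c n where h: "s \<in> ?T" "c \<in> ?T" "c \<noteq> 0" "n \<in> N" "r = s / c + n"
    using recip_sums_decompose[OF T iN _ r(1)] by blast
  have ce: "c * e \<in> ?T" "c * e \<noteq> 0" using subring_mult[OF T h(2)] e h(3) by auto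
  have "(s - c * e) * inverse (c * e) = (r * inverse e - 1) - n * inverse e"
    unfolding h(5) using h(3) e(2) by (simp add: field_simps)
  also have "\<dots> \<in> N" using ideal_diff[OF A iN r(2) ideal_mult_right[OF iN ie h(4)]] .
  finally have w: "(s - c * e) * inverse (c * e) \<in> N" .
  show ?thesis
  proof (cases "s = c * e")
    case True
    then have "e = r - n" using h(3,5) by simp
    then show ?thesis using subring_diff[OF A r(1)] ideal_subset[OF iN] h(4) by blast
  next
    case False
    have "s - c * e \<in> ?T" using subring_diff[OF T h(1) ce(1)] .
    then have "inverse (s - c * e) \<in> ?A" using False recip_sums_inverse[of "s - c * e" E] by auto
    then have "inverse (s - c * e) * ((s - c * e) * inverse (c * e)) \<in> N"
      using ideal_mult_left[OF iN _ w] by blast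
    moreover have "inverse (s - c * e) * ((s - c * e) * inverse (c * e)) = inverse (c * e)"
      using False by (simp add: mult.assoc[symmetric])
    ultimately have "inverse (c * e) \<in> N" by (simp only:)
    then show ?thesis using ce by blast
  qed
qed

lemma recip_sums_nonunits_subset_jacobson:
  assumes E: "is_subring E"
  shows "nonunits (recip_sums E) \<subseteq> jacobson (recip_sums E)"
proof
  let ?A = "recip_sums E" and ?J = "jacobson (recip_sums E)"
  fix x assume x: "x \<in> nonunits ?A"
  have A: "is_subring ?A" using is_subring_recip_sums[OF E] .
  have T: "is_subring (E \<inter> ?A)" using E A unfolding is_subring_def by blast
  have "inverse e \<in> ?J" if "e \<in> E" "e \<noteq> 0" "e \<notin> E \<inter> ?A" for e
  proof -
    have "inverse e \<in> N" if "maximal_ideal ?A N" for N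
      using recip_sums_maximal_ideal_inverse[OF E that \<open>e \<in> E\<close> \<open>e \<noteq> 0\<close>] \<open>e \<in> E\<close> \<open>e \<notin> E \<inter> ?A\<close>
      by blast
    then show ?thesis using recip_sums_inverse[OF that(1,2)] unfolding jacobson_def by blast
  qed
  then obtain s c j where h: "s \<in> E \<inter> ?A" "c \<in> E \<inter> ?A" "c \<noteq> 0" "j \<in> ?J" "x = s / c + j"
    using recip_sums_decompose[OF T is_ideal_jacobson[OF A]] x unfolding nonunits_def by blast
  show "x \<in> ?J"
  proof (cases "s = 0")
    case True
    then show ?thesis using h by simp
  next
    case False
    have "s * inverse c \<in> ?A" "c * inverse s \<in> ?A"
      using h False recip_sums_inverse subring_mult[OF A] by auto
    then have "x \<notin> nonunits ?A"
      using jacobson_add_unit[OF A _ _ _ h(4), of "s / c"] h(3,5) False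
      by (simp add: divide_inverse mult.commute)
    then show ?thesis using x by blast
  qed
qed

theorem maximal_ideal_nonunits_recip_sums:
  assumes E: "is_subring E"
  shows "maximal_ideal (recip_sums E) (nonunits (recip_sums E))"
proof -
  let ?A = "recip_sums E"
  have A: "is_subring ?A" using is_subring_recip_sums[OF E] .
  have "0 \<in> nonunits ?A" using subring_zero[OF A] unfolding nonunits_def by simp
  then obtain N where N: "maximal_ideal ?A N" using ex_maximal_ideal[OF A] by blast
  have "N \<subseteq> nonunits ?A"
    using ideal_subset_nonunits maximal_ideal_is_ideal[OF N] maximal_ideal_one[OF N] .
  moreover have "nonunits ?A \<subseteq> N"
    using recip_sums_nonunits_subset_jacobson[OF E] N unfolding jacobson_def by blast
  ultimately show ?thesis using N by (simp add: subset_antisym)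
qed

section \<open>The reciprocal complement of an integral domain\<close>

definition to_fract :: "'a::idom \<Rightarrow> 'a fract" where
  "to_fract d = Fract d 1"

lemma to_fract_0 [simp]: "to_fract 0 = 0"
  and to_fract_1 [simp]: "to_fract 1 = 1"
  and to_fract_add [simp]: "to_fract (a + b) = to_fract a + to_fract b"
  and to_fract_diff [simp]: "to_fract (a - b) = to_fract a - to_fract b"
  and to_fract_uminus [simp]: "to_fract (- a) = - to_fract a"
  and to_fract_mult [simp]: "to_fract (a * b) = to_fract a * to_fract b"
  unfolding to_fract_def by (simp_all add: Zero_fract_def One_fract_def)

lemma to_fract_power [simp]: "to_fract (a ^ n) = to_fract a ^ n"
  by (induction n) simp_all

lemma to_fract_eq_iff [simp]: "to_fract a = to_fract b \<longleftrightarrow> a = b"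
  unfolding to_fract_def by (simp add: eq_fract)

lemma to_fract_eq_0_iff [simp]: "to_fract a = 0 \<longleftrightarrow> a = 0"
  using to_fract_eq_iff[of a 0] by simp

lemma Fract_1_eq_inverse: "Fract 1 d = inverse (to_fract d)"
  unfolding to_fract_def by simp

lemma is_subring_range_to_fract: "is_subring (range (to_fract :: 'a::idom \<Rightarrow> _))"
  unfolding is_subring_def
proof (intro conjI ballI)
  show "0 \<in> range to_fract" "1 \<in> range to_fract"
    using rangeI[of to_fract 0] rangeI[of to_fract 1] by simp_all
  fix a b :: "'a fract" assume "a \<in> range to_fract" "b \<in> range to_fract"
  then obtain u v where "a = to_fract u" "b = to_fract v" by blast
  then show "a + b \<in> range to_fract" "- a \<in> range to_fract" "a * b \<in> range to_fract"
    using rangeI[of to_fract "u + v"] rangeI[of to_fract "- u"] rangeI[of to_fract "u * v"]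
    by simp_all
qed

lemma is_subring_fract_iff: "is_subring_fract S \<longleftrightarrow> is_subring S"
  unfolding is_subring_fract_def is_subring_def by (metis diff_0 diff_conv_add_uminus)

lemma recip_compl_eq: "recip_compl = recip_sums (range (to_fract :: 'a::idom \<Rightarrow> _))"
proof
  have "recip_sums (range (to_fract :: 'a \<Rightarrow> _)) \<in>
      {S. is_subring_fract S \<and> (\<forall>d. d \<noteq> 0 \<longrightarrow> Fract 1 d \<in> S)}"
    using is_subring_recip_sums[OF is_subring_range_to_fract]
    by (auto simp: is_subring_fract_iff Fract_1_eq_inverse intro: recip_sums_inverse)
  then show "recip_compl \<subseteq> recip_sums (range (to_fract :: 'a \<Rightarrow> _))"
    unfolding recip_compl_def by blast
next
  show "recip_sums (range (to_fract :: 'a \<Rightarrow> _)) \<subseteq> recip_compl"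
  proof
    fix x assume "x \<in> recip_sums (range to_fract)"
    then show "x \<in> recip_compl"
    proof (induction x rule: recip_sums.induct)
      case zero
      then show ?case unfolding recip_compl_def is_subring_fract_def by blast
    next
      case (add_inverse x e)
      then obtain d where "e = to_fract d" "d \<noteq> 0" by auto
      then show ?case using add_inverse.IH
        unfolding recip_compl_def is_subring_fract_def by (auto simp: Fract_1_eq_inverse)
    qed
  qed
qed

lemma is_subring_recip_compl: "is_subring recip_compl"
  unfolding recip_compl_eq using is_subring_recip_sums[OF is_subring_range_to_fract] .

lemma inverse_to_fract_in_recip_compl: "inverse (to_fract d) \<in> recip_compl"
  using recip_sums_inverse[of "to_fract d" "range to_fract"] subring_zero[OF is_subring_recip_compl]
  unfolding recip_compl_eq by (cases "d = 0") auto

lemma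
  assumes "prime_ideal_of R P"
  shows prime_ideal_of_subset: "P \<subseteq> R" and prime_ideal_of_zero: "0 \<in> P"
    and prime_ideal_of_add: "a \<in> P \<Longrightarrow> b \<in> P \<Longrightarrow> a + b \<in> P"
    and prime_ideal_of_diff: "a \<in> P \<Longrightarrow> b \<in> P \<Longrightarrow> a - b \<in> P"
    and prime_ideal_of_mult: "r \<in> R \<Longrightarrow> a \<in> P \<Longrightarrow> r * a \<in> P"
    and prime_ideal_of_one: "1 \<notin> P"
    and prime_ideal_of_prime: "a \<in> R \<Longrightarrow> b \<in> R \<Longrightarrow> a * b \<in> P \<Longrightarrow> a \<in> P \<or> b \<in> P"
  using assms unfolding prime_ideal_of_def by blast+

lemma prime_ideal_of_power:
  assumes Q: "prime_ideal_of R Q" and R: "is_subring R" and x: "x \<in> R"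
  shows "x ^ n \<in> Q \<Longrightarrow> x \<in> Q"
proof (induction n)
  case 0
  then show ?case using prime_ideal_of_one[OF Q] by simp
next
  case (Suc n)
  then show ?case using prime_ideal_of_prime[OF Q x subring_power[OF R x]] by auto
qed

lemma prime_ideal_of_contraction:
  assumes A: "is_subring A" and R: "is_subring R" "R \<subseteq> A" and N: "maximal_ideal A N"
  shows "prime_ideal_of R (N \<inter> R)"
  unfolding prime_ideal_of_def
proof (intro conjI ballI impI)
  have iN: "is_ideal A N" using maximal_ideal_is_ideal[OF N] .
  show "0 \<in> N \<inter> R" using ideal_zero[OF iN] subring_zero[OF R(1)] by blast
  show "1 \<notin> N \<inter> R" using maximal_ideal_one[OF N] by blast
  fix a b assume "a \<in> N \<inter> R" "b \<in> N \<inter> R"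
  then show "a + b \<in> N \<inter> R" "a - b \<in> N \<inter> R"
    using ideal_add[OF iN] ideal_diff[OF A iN] subring_add[OF R(1)] subring_diff[OF R(1)] by auto
next
  fix r a assume "r \<in> R" "a \<in> N \<inter> R"
  then show "r * a \<in> N \<inter> R"
    using ideal_mult_left[OF maximal_ideal_is_ideal[OF N]] subring_mult[OF R(1)] R(2) by blast
next
  fix a b assume "a \<in> R" "b \<in> R" "a * b \<in> N \<inter> R"
  then show "a \<in> N \<inter> R \<or> b \<in> N \<inter> R" using maximal_ideal_prime[OF A N] R(2) by blast
qed blast

section \<open>The primes p_f\<close>

text \<open>The localisation D[1/f], inside the fraction field.\<close>
definition away :: "'a::idom \<Rightarrow> 'a fract set" where
  "away f = {x. \<exists>k. x * to_fract f ^ k \<in> range to_fract}"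

lemma is_subring_away: "is_subring (away f)"
  unfolding is_subring_def
proof (intro conjI ballI)
  have "0 * to_fract f ^ 0 = to_fract 0" "1 * to_fract f ^ 0 = to_fract 1" by simp_all
  then show "0 \<in> away f" "1 \<in> away f" unfolding away_def by blast+
  fix a b assume "a \<in> away f" "b \<in> away f"
  then obtain k l u v where kl: "a * to_fract f ^ k = to_fract u" "b * to_fract f ^ l = to_fract v"
    unfolding away_def by blast
  have "(a + b) * to_fract f ^ (k + l) =
      (a * to_fract f ^ k) * to_fract f ^ l + (b * to_fract f ^ l) * to_fract f ^ k"
    "(a * b) * to_fract f ^ (k + l) = (a * to_fract f ^ k) * (b * to_fract f ^ l)"
    by (simp_all add: power_add algebra_simps)
  then have "(a + b) * to_fract f ^ (k + l) = to_fract (u * f ^ l + v * f ^ k)"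
    "- a * to_fract f ^ k = to_fract (- u)"
    "(a * b) * to_fract f ^ (k + l) = to_fract (u * v)"
    using kl by simp_all
  then show "a + b \<in> away f" "- a \<in> away f" "a * b \<in> away f"
    unfolding away_def by (metis (mono_tags) mem_Collect_eq rangeI)+
qed

lemma range_to_fract_subset_away: "range to_fract \<subseteq> away f"
  unfolding away_def by (force intro: exI[of _ 0])

lemma recip_compl_subset_recip_sums_away: "recip_compl \<subseteq> recip_sums (away f)"
  unfolding recip_compl_eq using recip_sums_mono[OF range_to_fract_subset_away] .

lemma recip_sums_away:
  assumes f: "f \<noteq> 0"
  shows "recip_sums (away f) = {r * to_fract f ^ k | r k. r \<in> recip_compl}"
proof
  show "{r * to_fract f ^ k | r k. r \<in> recip_compl} \<subseteq> recip_sums (away f)"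
  proof clarify
    fix r :: "'a fract" and k :: nat assume r: "r \<in> recip_compl"
    have "inverse (to_fract f) * to_fract f ^ 1 = to_fract 1" using f by simp
    then have "inverse (to_fract f) \<in> away f"
      unfolding away_def by (metis (mono_tags) mem_Collect_eq rangeI)
    then have "to_fract f \<in> recip_sums (away f)"
      using recip_sums_inverse[of "inverse (to_fract f)"] f by simp
    then show "r * to_fract f ^ k \<in> recip_sums (away f)"
      using r recip_compl_subset_recip_sums_away is_subring_recip_sums[OF is_subring_away]
      by (blast intro: subring_mult subring_power)
  qed
next
  show "recip_sums (away f) \<subseteq> {r * to_fract f ^ k | r k. r \<in> recip_compl}"
  proof
    fix y assume "y \<in> recip_sums (away f)"
    then show "y \<in> {r * to_fract f ^ k | r k. r \<in> recip_compl}"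
    proof (induction y rule: recip_sums.induct)
      case zero
      then show ?case using subring_zero[OF is_subring_recip_compl] by force
    next
      case (add_inverse y e)
      then obtain r k where r: "r \<in> recip_compl" "y = r * to_fract f ^ k" by blast
      obtain l d where d: "e * to_fract f ^ l = to_fract d"
        using \<open>e \<in> away f\<close> unfolding away_def by blast
      have "d \<noteq> 0" using d f \<open>e \<noteq> 0\<close> by (metis mult_eq_0_iff power_not_zero to_fract_eq_0_iff)
      define r' where
        "r' = r * inverse (to_fract f) ^ l + inverse (to_fract d) * inverse (to_fract f) ^ k"
      have "r' \<in> recip_compl" unfolding r'_def
        using r(1) inverse_to_fract_in_recip_compl is_subring_recip_compl
        by (blast intro: subring_add subring_mult subring_power)
      moreover have "y + inverse e = r' * to_fract f ^ (k + l)"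
        unfolding r'_def r(2) using d f \<open>e \<noteq> 0\<close> \<open>d \<noteq> 0\<close>
        by (simp add: field_simps power_add)
      ultimately show ?case by blast
    qed
  qed
qed

text \<open>The prime p_f, as the contraction to R(D) of the maximal ideal of the local ring R(D[1/f]).\<close>
definition p_away :: "'a::idom \<Rightarrow> 'a fract set" where
  "p_away f = nonunits (recip_sums (away f)) \<inter> recip_compl"

lemma prime_ideal_of_p_away: "prime_ideal_of recip_compl (p_away f)"
  unfolding p_away_def
  using prime_ideal_of_contraction[OF is_subring_recip_sums[OF is_subring_away]
      is_subring_recip_compl recip_compl_subset_recip_sums_away
      maximal_ideal_nonunits_recip_sums[OF is_subring_away]] .

lemma Fract_1_notin_p_away_iff:
  assumes "x \<noteq> 0"
  shows "Fract 1 x \<notin> p_away f \<longleftrightarrow> to_fract x \<in> recip_sums (away f)"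
  using assms inverse_to_fract_in_recip_compl[of x] recip_compl_subset_recip_sums_away[of f]
  unfolding p_away_def nonunits_def Fract_1_eq_inverse by auto

lemma Fract_1_notin_p_away: "f \<noteq> 0 \<Longrightarrow> Fract 1 f \<notin> p_away f"
  using Fract_1_notin_p_away_iff[of f f] recip_sums_away[of f]
    subring_one[OF is_subring_recip_compl]
  by (force intro: exI[of _ 1])

lemma p_away_maximal:
  assumes f: "f \<noteq> 0" and Q: "prime_ideal_of recip_compl Q" and Qf: "Fract 1 f \<notin> Q"
  shows "Q \<subseteq> p_away f"
proof
  fix q assume q: "q \<in> Q"
  then have qR: "q \<in> recip_compl" using prime_ideal_of_subset[OF Q] by blast
  show "q \<in> p_away f"
  proof (rule ccontr)
    assume "q \<notin> p_away f"
    then have "q \<noteq> 0" "inverse q \<in> recip_sums (away f)"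
      using qR recip_compl_subset_recip_sums_away[of f] unfolding p_away_def nonunits_def by auto
    then obtain r k where r: "r \<in> recip_compl" "inverse q = r * to_fract f ^ k"
      using recip_sums_away[OF f] by blast
    have "r * q = Fract 1 f ^ k"
      using r(2) \<open>q \<noteq> 0\<close> f by (simp add: Fract_1_eq_inverse field_simps power_inverse)
    moreover have "r * q \<in> Q" using prime_ideal_of_mult[OF Q r(1) q] .
    ultimately show False
      using prime_ideal_of_power[OF Q is_subring_recip_compl] Qf
        inverse_to_fract_in_recip_compl[of f] by (simp add: Fract_1_eq_inverse)
  qed
qed

lemma p_of_eq_p_away:
  assumes f: "f \<noteq> 0"
  shows "p_of f = p_away f"
  unfolding p_of_def
proof (rule the_equality)
  show "prime_ideal_of recip_compl (p_away f) \<and> Fract 1 f \<notin> p_away f \<and>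
      (\<forall>Q. prime_ideal_of recip_compl Q \<and> Fract 1 f \<notin> Q \<and> p_away f \<subseteq> Q \<longrightarrow> Q = p_away f)"
    using prime_ideal_of_p_away Fract_1_notin_p_away[OF f] p_away_maximal[OF f] by blast
  fix P assume "prime_ideal_of recip_compl P \<and> Fract 1 f \<notin> P \<and>
      (\<forall>Q. prime_ideal_of recip_compl Q \<and> Fract 1 f \<notin> Q \<and> P \<subseteq> Q \<longrightarrow> Q = P)"
  then show "P = p_away f"
    using p_away_maximal[OF f] prime_ideal_of_p_away Fract_1_notin_p_away[OF f] by blast
qed

lemma p_away_mult_subset:
  assumes "f \<noteq> 0" "g \<noteq> 0"
  shows "p_away (f * g) \<subseteq> p_away f \<inter> p_away g"
proof -
  have "p_away (f * g) \<subseteq> p_away f" if f: "f \<noteq> 0" and g: "g \<noteq> 0" for f g :: 'a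
  proof (rule p_away_maximal[OF f prime_ideal_of_p_away])
    show "Fract 1 f \<notin> p_away (f * g)"
    proof
      assume "Fract 1 f \<in> p_away (f * g)"
      then have "Fract 1 g * Fract 1 f \<in> p_away (f * g)"
        using prime_ideal_of_mult[OF prime_ideal_of_p_away] inverse_to_fract_in_recip_compl[of g]
        unfolding Fract_1_eq_inverse by blast
      then show False using Fract_1_notin_p_away[of "f * g"] f g by (simp add: mult.commute)
    qed
  qed
  from this[OF assms] this[OF assms(2,1)] show ?thesis by (simp add: mult.commute)
qed

section \<open>Factroids and G(W)\<close>

lemma
  assumes "factroid H"
  shows factroid_zero: "0 \<in> H"
    and factroid_add: "a \<in> H \<Longrightarrow> b \<in> H \<Longrightarrow> a + b \<in> H"
    and factroid_diff: "a \<in> H \<Longrightarrow> b \<in> H \<Longrightarrow> a - b \<in> H"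
    and factroid_factor: "f \<noteq> 0 \<Longrightarrow> g \<noteq> 0 \<Longrightarrow> f * g \<in> H \<Longrightarrow> f \<in> H"
  using assms unfolding factroid_def by blast+

lemma factroid_Inter: "(\<And>H. H \<in> \<H> \<Longrightarrow> factroid H) \<Longrightarrow> factroid (\<Inter>\<H>)"
  unfolding factroid_def by blast

lemma factroid_factroid_hull: "factroid (factroid_hull S)"
  unfolding factroid_hull_def by (rule factroid_Inter) blast

lemma factroid_hull_subset: "S \<subseteq> factroid_hull S"
  unfolding factroid_hull_def by blast

lemma factroid_hull_least: "factroid H \<Longrightarrow> S \<subseteq> H \<Longrightarrow> factroid_hull S \<subseteq> H"
  unfolding factroid_hull_def by blast

lemma factroid_hull_mono: "S \<subseteq> T \<Longrightarrow> factroid_hull S \<subseteq> factroid_hull T"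
  by (meson factroid_factroid_hull factroid_hull_least factroid_hull_subset order_trans)

lemma factroid_mult_preimage:
  assumes K: "factroid K" and e: "e \<noteq> 0"
  shows "factroid {u. u * e \<in> K}"
  unfolding factroid_def
proof (intro conjI ballI allI impI)
  show "0 \<in> {u. u * e \<in> K}" using factroid_zero[OF K] by simp
  fix a b assume "a \<in> {u. u * e \<in> K}" "b \<in> {u. u * e \<in> K}"
  then show "a + b \<in> {u. u * e \<in> K}" "a - b \<in> {u. u * e \<in> K}"
    using factroid_add[OF K] factroid_diff[OF K] by (simp_all add: algebra_simps)
next
  fix f g assume fg: "f \<noteq> 0 \<and> g \<noteq> 0 \<and> f * g \<in> {u. u * e \<in> K}"
  then have "(f * e) * g \<in> K" "(g * e) * f \<in> K" by (simp_all add: mult_ac)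
  then have "f * e \<in> K" "g * e \<in> K"
    using factroid_factor[OF K, of "f * e" g] factroid_factor[OF K, of "g * e" f] fg e by simp_all
  then show "f \<in> {u. u * e \<in> K}" "g \<in> {u. u * e \<in> K}" by simp_all
qed

lemma mult_in_factroid_hull:
  assumes "x \<in> factroid_hull S" "e \<noteq> 0"
  shows "x * e \<in> factroid_hull ((\<lambda>s. s * e) ` S)"
proof -
  have "S \<subseteq> {u. u * e \<in> factroid_hull ((\<lambda>s. s * e) ` S)}"
    using factroid_hull_subset[of "(\<lambda>s. s * e) ` S"] by blast
  then have "factroid_hull S \<subseteq> {u. u * e \<in> factroid_hull ((\<lambda>s. s * e) ` S)}"
    by (rule factroid_hull_least[OF factroid_mult_preimage[OF factroid_factroid_hull assms(2)]])
  then show ?thesis using assms(1) by blast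
qed

lemma recip_compl_factroid_witness:
  assumes f: "f \<noteq> 0" and r: "r \<in> recip_compl"
  shows "\<exists>d z. d \<noteq> 0 \<and> to_fract z = to_fract d * r * to_fract f \<and> z \<in> factroid_hull {d * f}"
  using r unfolding recip_compl_eq
proof (induction r rule: recip_sums.induct)
  case zero
  show ?case using factroid_zero[OF factroid_factroid_hull]
    by (intro exI[of _ 1] exI[of _ 0]) simp
next
  case (add_inverse x e)
  then obtain d z where h: "d \<noteq> 0" "to_fract z = to_fract d * x * to_fract f"
    "z \<in> factroid_hull {d * f}" by blast
  obtain c where c: "e = to_fract c" "c \<noteq> 0" using add_inverse.hyps by auto
  have zc: "z * c \<in> factroid_hull {d * c * f}"
    using mult_in_factroid_hull[OF h(3) c(2)] by (simp add: mult_ac)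
  have "(d * f) * c \<in> factroid_hull {d * c * f}"
    using factroid_hull_subset[of "{d * c * f}"] by (simp add: mult_ac)
  then have "d * f \<in> factroid_hull {d * c * f}"
    using factroid_factor[OF factroid_factroid_hull, of "d * f" c] h(1) f c(2) by simp
  with zc have "z * c + d * f \<in> factroid_hull {d * c * f}"
    using factroid_add[OF factroid_factroid_hull] by blast
  moreover have "to_fract (z * c + d * f) = to_fract (d * c) * (x + inverse e) * to_fract f"
    using h(2) c by (simp add: field_simps)
  moreover have "d * c \<noteq> 0" using h(1) c(2) by simp
  ultimately show ?case by blast
qed

text \<open>
  The elements of D lying in c R(D) W. G(W) is the case c = 1; general c is needed for
  regularity, since g G(W) generates a factroid inside recip_span g W rather than inside g G(W).
\<close>
definition recip_span :: "'a::idom \<Rightarrow> 'a set \<Rightarrow> 'a set" where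
  "recip_span c W =
     {z. \<exists>f\<in>W - {0}. \<exists>r\<in>recip_compl. to_fract z = to_fract c * r * to_fract f}"

lemma recip_spanI:
  "f \<in> W \<Longrightarrow> f \<noteq> 0 \<Longrightarrow> r \<in> recip_compl \<Longrightarrow> to_fract z = to_fract c * r * to_fract f \<Longrightarrow>
    z \<in> recip_span c W"
  unfolding recip_span_def by blast

lemma recip_spanE:
  assumes "z \<in> recip_span c W"
  obtains f r where "f \<in> W" "f \<noteq> 0" "r \<in> recip_compl" "to_fract z = to_fract c * r * to_fract f"
  using assms unfolding recip_span_def by blast

lemma factroid_recip_span:
  assumes W1: "1 \<in> W" and Wmult: "\<forall>a\<in>W. \<forall>b\<in>W. a * b \<in> W"
  shows "factroid (recip_span c W)"
  unfolding factroid_def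
proof (intro conjI ballI allI impI)
  note R = is_subring_recip_compl
  show "0 \<in> recip_span c W"
    using recip_spanI[OF W1 _ subring_zero[OF R]] by simp
  fix a b assume "a \<in> recip_span c W" "b \<in> recip_span c W"
  then obtain f r g s where
    a: "f \<in> W" "f \<noteq> 0" "r \<in> recip_compl" "to_fract a = to_fract c * r * to_fract f" and
    b: "g \<in> W" "g \<noteq> 0" "s \<in> recip_compl" "to_fract b = to_fract c * s * to_fract g"
    by (elim recip_spanE)
  have fg: "f * g \<in> W" "f * g \<noteq> 0" using a b Wmult by auto
  define u where "u = r * inverse (to_fract g)"
  define v where "v = s * inverse (to_fract f)"
  have "u \<in> recip_compl" "v \<in> recip_compl"
    unfolding u_def v_def
    using a(3) b(3) inverse_to_fract_in_recip_compl subring_mult[OF R] by blast+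
  then have "u + v \<in> recip_compl" "u - v \<in> recip_compl"
    using subring_add[OF R] subring_diff[OF R] by blast+
  moreover have "to_fract (a + b) = to_fract c * (u + v) * to_fract (f * g)"
    "to_fract (a - b) = to_fract c * (u - v) * to_fract (f * g)"
    unfolding u_def v_def using a(2,4) b(2,4) by (simp_all add: field_simps)
  ultimately show "a + b \<in> recip_span c W" "a - b \<in> recip_span c W"
    using recip_spanI[OF fg] by blast+
next
  fix f g assume "f \<noteq> 0 \<and> g \<noteq> 0 \<and> f * g \<in> recip_span c W"
  then obtain h r where fg: "f \<noteq> 0" "g \<noteq> 0" and
    h: "h \<in> W" "h \<noteq> 0" "r \<in> recip_compl" "to_fract (f * g) = to_fract c * r * to_fract h"
    by (auto elim: recip_spanE)
  have "r * inverse (to_fract g) \<in> recip_compl" "r * inverse (to_fract f) \<in> recip_compl"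
    using h(3) inverse_to_fract_in_recip_compl subring_mult[OF is_subring_recip_compl] by blast+
  moreover have "to_fract f = to_fract c * (r * inverse (to_fract g)) * to_fract h"
    "to_fract g = to_fract c * (r * inverse (to_fract f)) * to_fract h"
    using h(4) fg by (simp_all add: field_simps)
  ultimately show "f \<in> recip_span c W" "g \<in> recip_span c W"
    using recip_spanI[OF h(1,2)] by blast+
qed

lemma subset_recip_span:
  assumes "1 \<in> W"
  shows "W \<subseteq> recip_span 1 W"
proof
  fix w assume w: "w \<in> W"
  show "w \<in> recip_span 1 W"
  proof (cases "w = 0")
    case True
    then show ?thesis using recip_spanI[OF assms _ subring_zero[OF is_subring_recip_compl]] by simp
  next
    case False
    then show ?thesis using recip_spanI[OF w _ subring_one[OF is_subring_recip_compl]] by simp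
  qed
qed

lemma regular_factroid_recip_span:
  assumes W1: "1 \<in> W" and Wmult: "\<forall>a\<in>W. \<forall>b\<in>W. a * b \<in> W"
  shows "regular_factroid (recip_span 1 W)"
  unfolding regular_factroid_def
proof (intro conjI allI impI)
  show "factroid (recip_span 1 W)" using factroid_recip_span[OF W1 Wmult] .
  fix g :: 'a assume g: "g \<noteq> 0"
  let ?G = "recip_span 1 W"
  have "(\<lambda>h. g * h) ` ?G \<subseteq> recip_span g W"
    by (auto elim!: recip_spanE intro!: recip_spanI simp: mult.assoc)
  then have hull: "factroid_hull ((\<lambda>h. g * h) ` ?G) \<subseteq> recip_span g W"
    using factroid_hull_least[OF factroid_recip_span[OF W1 Wmult]] by blast
  have "y \<in> ?G" if "g * y \<in> recip_span g W" for y
    using that g by (auto elim!: recip_spanE intro!: recip_spanI simp: mult.assoc)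
  moreover have "g * y \<in> factroid_hull ((\<lambda>h. g * h) ` ?G)" if "y \<in> ?G" for y
    using that factroid_hull_subset by blast
  ultimately show "{y. g * y \<in> factroid_hull ((\<lambda>h. g * h) ` ?G)} = ?G"
    using hull by blast
qed

lemma G_of_eq_recip_span:
  assumes W1: "1 \<in> W" and Wmult: "\<forall>a\<in>W. \<forall>b\<in>W. a * b \<in> W"
  shows "G_of W = recip_span 1 W"
proof
  show "G_of W \<subseteq> recip_span 1 W"
    unfolding G_of_def
    using regular_factroid_recip_span[OF W1 Wmult] subset_recip_span[OF W1] by blast
  show "recip_span 1 W \<subseteq> G_of W"
  proof
    fix y assume "y \<in> recip_span 1 W"
    then obtain f r where f: "f \<in> W" "f \<noteq> 0" and r: "r \<in> recip_compl"
      and y: "to_fract y = r * to_fract f"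
      by (auto elim: recip_spanE)
    obtain d z where d: "d \<noteq> 0" and z: "to_fract z = to_fract d * r * to_fract f"
      and dz: "z \<in> factroid_hull {d * f}"
      using recip_compl_factroid_witness[OF f(2) r] by blast
    have "to_fract z = to_fract (d * y)" using z y by (simp add: mult.assoc)
    then have "z = d * y" by (simp only: to_fract_eq_iff)
    show "y \<in> G_of W"
      unfolding G_of_def
    proof
      fix H assume "H \<in> {H. regular_factroid H \<and> W \<subseteq> H}"
      then have H: "regular_factroid H" "W \<subseteq> H" by blast+
      have "{d * f} \<subseteq> (\<lambda>h. d * h) ` H" using f(1) H(2) by blast
      then have "d * y \<in> factroid_hull ((\<lambda>h. d * h) ` H)"
        using dz factroid_hull_mono \<open>z = d * y\<close> by blast
      then show "y \<in> H" using H(1) d unfolding regular_factroid_def by blast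
    qed
  qed
qed

lemma power_in_multiplicative:
  assumes "1 \<in> W" "\<forall>a\<in>W. \<forall>b\<in>W. a * b \<in> W" "f \<in> W"
  shows "f ^ k \<in> W"
  using assms by (induction k) simp_all

lemma recip_span_iff_recip_sums_away:
  assumes W1: "1 \<in> W" and Wmult: "\<forall>a\<in>W. \<forall>b\<in>W. a * b \<in> W"
  shows "x \<in> recip_span 1 W \<longleftrightarrow> (\<exists>f\<in>W - {0}. to_fract x \<in> recip_sums (away f))"
proof
  assume "x \<in> recip_span 1 W"
  then obtain f r where "f \<in> W" "f \<noteq> 0" "r \<in> recip_compl" "to_fract x = r * to_fract f ^ 1"
    by (auto elim: recip_spanE)
  then show "\<exists>f\<in>W - {0}. to_fract x \<in> recip_sums (away f)" using recip_sums_away by blast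
next
  assume "\<exists>f\<in>W - {0}. to_fract x \<in> recip_sums (away f)"
  then obtain f r k where f: "f \<in> W" "f \<noteq> 0"
    and "r \<in> recip_compl" "to_fract x = r * to_fract (f ^ k)"
    using recip_sums_away by fastforce
  moreover have "f ^ k \<in> W" "f ^ k \<noteq> 0"
    using power_in_multiplicative[OF W1 Wmult f(1)] f(2) by simp_all
  ultimately show "x \<in> recip_span 1 W" using recip_spanI by fastforce
qed

lemma prime_ideal_of_INT:
  assumes I: "i \<in> I" and prime: "\<And>i. i \<in> I \<Longrightarrow> prime_ideal_of R (P i)"
    and directed: "\<And>i j. i \<in> I \<Longrightarrow> j \<in> I \<Longrightarrow> \<exists>k\<in>I. P k \<subseteq> P i \<inter> P j"
  shows "prime_ideal_of R (\<Inter>i\<in>I. P i)"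
  unfolding prime_ideal_of_def
proof (intro conjI ballI impI)
  fix a b assume ab: "a \<in> R" "b \<in> R" "a * b \<in> (\<Inter>i\<in>I. P i)"
  show "a \<in> (\<Inter>i\<in>I. P i) \<or> b \<in> (\<Inter>i\<in>I. P i)"
  proof (rule ccontr)
    assume "\<not> ?thesis"
    then obtain i j where "i \<in> I" "j \<in> I" "a \<notin> P i" "b \<notin> P j" by blast
    moreover obtain k where "k \<in> I" "P k \<subseteq> P i \<inter> P j" using directed calculation(1,2) by blast
    ultimately show False using prime_ideal_of_prime[OF prime[of k] ab(1,2)] ab(3) by blast
  qed
next
  show "(\<Inter>i\<in>I. P i) \<subseteq> R" using prime_ideal_of_subset[OF prime[OF I]] I by blast
  show "1 \<notin> (\<Inter>i\<in>I. P i)" using prime_ideal_of_one[OF prime[OF I]] I by blast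
  show "0 \<in> (\<Inter>i\<in>I. P i)" using prime_ideal_of_zero[OF prime] by blast
next
  fix a b assume "a \<in> (\<Inter>i\<in>I. P i)" "b \<in> (\<Inter>i\<in>I. P i)"
  then show "a + b \<in> (\<Inter>i\<in>I. P i)" "a - b \<in> (\<Inter>i\<in>I. P i)"
    by (auto intro: prime_ideal_of_add[OF prime] prime_ideal_of_diff[OF prime])
next
  fix r a assume "r \<in> R" "a \<in> (\<Inter>i\<in>I. P i)"
  then show "r * a \<in> (\<Inter>i\<in>I. P i)" by (auto intro: prime_ideal_of_mult[OF prime])
qed

theorem mainTheorem14:
  fixes W :: "'a::idom set" and x :: 'a
  assumes "1 \<in> W"
    and "\<forall>a\<in>W. \<forall>b\<in>W. a * b \<in> W"
    and "x \<noteq> 0"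
  shows "prime_ideal_of recip_compl (p_W W) \<and> (Fract 1 x \<notin> p_W W \<longleftrightarrow> x \<in> G_of W)"
proof
  have p_W_eq: "p_W W = (\<Inter>f\<in>W - {0}. p_away f)"
    unfolding p_W_def by (simp add: p_of_eq_p_away)
  show "prime_ideal_of recip_compl (p_W W)"
    unfolding p_W_eq
  proof (rule prime_ideal_of_INT[OF _ prime_ideal_of_p_away])
    show "1 \<in> W - {0}" using assms(1) by simp
    fix f g assume "f \<in> W - {0}" "g \<in> W - {0}"
    then have "f * g \<in> W - {0}" "p_away (f * g) \<subseteq> p_away f \<inter> p_away g"
      using assms(2) p_away_mult_subset[of f g] by auto
    then show "\<exists>h\<in>W - {0}. p_away h \<subseteq> p_away f \<inter> p_away g" by blast
  qed
  have "Fract 1 x \<notin> p_W W \<longleftrightarrow> (\<exists>f\<in>W - {0}. to_fract x \<in> recip_sums (away f))"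
    unfolding p_W_eq using Fract_1_notin_p_away_iff[OF assms(3)] by blast
  also have "\<dots> \<longleftrightarrow> x \<in> G_of W"
    using recip_span_iff_recip_sums_away[OF assms(1,2)] G_of_eq_recip_span[OF assms(1,2)] by simp
  finally show "Fract 1 x \<notin> p_W W \<longleftrightarrow> x \<in> G_of W" .
qed

end
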